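(* Let $(X,\mathcal{O}(X))$ be a measurable space, $\mathcal{A}$ a unital $C^*$-algebra and $\mathcal{H}$ a Hilbert space. If $\mathcal{I}:\mathcal{O}(X)\to CP(\mathcal{A},\mathcal{B}(\mathcal{H}))$ is a pure CP instrument, then its POVM marginal $\mu_\mathcal{I}$ is trivial, i.e. for every $A\in\mathcal{O}(X)$ either $\mu_\mathcal{I}(A)=0$ or $\mu_\mathcal{I}(A)=\mu_\mathcal{I}(X)$.
   Context: A CP instrument is a map $\mathcal{I}$ from $\mathcal{O}(X)$ to the completely positive maps $\mathcal{A}\to\mathcal{B}(\mathcal{H})$ such that for all $a\in\mathcal{A}$, $h,k\in\mathcal{H}$, $A\mapsto\langle h,\mathcal{I}(A)(a)k\rangle$ is a countably additive complex measure. Its POVM marginal is $\mu_\mathcal{I}(A)=\mathcal{I}(A)(1_\mathcal{A})$. A CP instrument $\mathcal{J}$ is dominated by $\mathcal{I}$ if $\mathcal{I}-\mathcal{J}$ is a CP instrument; $\mathcal{I}$ is pure if every CP instrument dominated by $\mathcal{I}$ equals $t\mathcal{I}$ for some $t\in[0,1]$. *)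

theory Defs
  imports "HOL-Analysis.Analysis"
begin

class complex_normed_vector = real_normed_vector +
  fixes scaleC :: "complex \<Rightarrow> 'a \<Rightarrow> 'a"
  assumes scaleC_add_right: "scaleC c (x + y) = scaleC c x + scaleC c y"
    and scaleC_add_left: "scaleC (c + d) x = scaleC c x + scaleC d x"
    and scaleC_scaleC: "scaleC c (scaleC d x) = scaleC (c * d) x"
    and scaleC_one: "scaleC 1 x = x"
    and scaleR_scaleC: "scaleR r x = scaleC (complex_of_real r) x"
    and norm_scaleC: "norm (scaleC c x) = cmod c * norm x"

text \<open>Complex inner product, linear in the second and conjugate-linear in the
  first argument; the norm is the one induced by the inner product.\<close>
class complex_inner = complex_normed_vector +
  fixes cinner :: "'a \<Rightarrow> 'a \<Rightarrow> complex"
  assumes cinner_commute: "cinner x y = cnj (cinner y x)"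
    and cinner_add_right: "cinner x (y + z) = cinner x y + cinner x z"
    and cinner_scaleC_right: "cinner x (scaleC c y) = c * cinner x y"
    and cinner_self_nonneg: "Im (cinner x x) = 0 \<and> 0 \<le> Re (cinner x x)"
    and cinner_self_eq_zero: "cinner x x = 0 \<longleftrightarrow> x = 0"
    and norm_eq_sqrt_cinner: "norm x = sqrt (Re (cinner x x))"

class chilbert_space = complex_inner + complete_space

class unital_cstar_algebra = complex_normed_vector + real_normed_algebra_1 + banach +
  fixes cstar :: "'a \<Rightarrow> 'a"
  assumes scaleC_mult_left: "scaleC c x * y = scaleC c (x * y)"
    and mult_scaleC_right: "x * scaleC c y = scaleC c (x * y)"
    and cstar_cstar: "cstar (cstar x) = x"
    and cstar_add: "cstar (x + y) = cstar x + cstar y"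
    and cstar_scaleC: "cstar (scaleC c x) = scaleC (cnj c) (cstar x)"
    and cstar_mult: "cstar (x * y) = cstar y * cstar x"
    and cstar_identity: "norm (cstar x * x) = norm x * norm x"

definition bounded_clinear_op :: "('h::complex_normed_vector \<Rightarrow> 'h) \<Rightarrow> bool" where
  "bounded_clinear_op T \<longleftrightarrow>
     (\<forall>x y. T (x + y) = T x + T y) \<and> (\<forall>c x. T (scaleC c x) = scaleC c (T x)) \<and>
     (\<exists>K. \<forall>x. norm (T x) \<le> norm x * K)"

definition cnonneg :: "complex \<Rightarrow> bool" where
  "cnonneg z \<longleftrightarrow> Im z = 0 \<and> 0 \<le> Re z"

text \<open>Completely positive map \<open>\<phi> : A \<rightarrow> B(H)\<close>: a linear map with values in the
  bounded operators such that every amplification \<open>\<phi>\<^sub>n : M\<^sub>n(A) \<rightarrow> M\<^sub>n(B(H)) = B(H\<^sup>n)\<close>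
  is positive. Positive elements of the C*-algebra \<open>M\<^sub>n(A)\<close> are those of the form
  \<open>b\<^sup>* b\<close>, i.e. \<open>(b\<^sup>*b)\<^sub>i\<^sub>j = \<Sum>\<^sub>k (b\<^sub>k\<^sub>i)\<^sup>* b\<^sub>k\<^sub>j\<close>; an operator matrix \<open>[T\<^sub>i\<^sub>j]\<close> on \<open>H\<^sup>n\<close> is positive iff
  \<open>\<Sum>\<^sub>i\<^sub>j \<langle>h\<^sub>i, T\<^sub>i\<^sub>j h\<^sub>j\<rangle> \<ge> 0\<close> for all \<open>h \<in> H\<^sup>n\<close>.\<close>
definition cp_map :: "('a::unital_cstar_algebra \<Rightarrow> ('h::chilbert_space \<Rightarrow> 'h)) \<Rightarrow> bool" where
  "cp_map \<phi> \<longleftrightarrow>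
     (\<forall>a b x. \<phi> (a + b) x = \<phi> a x + \<phi> b x) \<and>
     (\<forall>c a x. \<phi> (scaleC c a) x = scaleC c (\<phi> a x)) \<and>
     (\<forall>a. bounded_clinear_op (\<phi> a)) \<and>
     (\<forall>(n::nat) (b::nat \<Rightarrow> nat \<Rightarrow> 'a) (h::nat \<Rightarrow> 'h).
        cnonneg (\<Sum>i<n. \<Sum>j<n. cinner (h i) (\<phi> (\<Sum>k<n. cstar (b k i) * b k j) (h j))))"

definition cp_instrument ::
  "'x measure \<Rightarrow> ('x set \<Rightarrow> 'a::unital_cstar_algebra \<Rightarrow> ('h::chilbert_space \<Rightarrow> 'h)) \<Rightarrow> bool" where
  "cp_instrument M I \<longleftrightarrow>
     (\<forall>A\<in>sets M. cp_map (I A)) \<and>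
     (\<forall>a h k. \<forall>F::nat \<Rightarrow> 'x set. range F \<subseteq> sets M \<longrightarrow> disjoint_family F \<longrightarrow>
        (\<lambda>n. cinner h (I (F n) a k)) sums cinner h (I (\<Union>n. F n) a k))"

definition povm_marginal ::
  "('x set \<Rightarrow> 'a::unital_cstar_algebra \<Rightarrow> ('h::chilbert_space \<Rightarrow> 'h)) \<Rightarrow> 'x set \<Rightarrow> ('h \<Rightarrow> 'h)" where
  "povm_marginal I A = I A 1"

definition dominated_by ::
  "'x measure \<Rightarrow> ('x set \<Rightarrow> 'a::unital_cstar_algebra \<Rightarrow> ('h::chilbert_space \<Rightarrow> 'h)) \<Rightarrow>
   ('x set \<Rightarrow> 'a \<Rightarrow> ('h \<Rightarrow> 'h)) \<Rightarrow> bool" where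
  "dominated_by M J I \<longleftrightarrow> cp_instrument M J \<and> cp_instrument M (\<lambda>A a x. I A a x - J A a x)"

definition pure_instrument ::
  "'x measure \<Rightarrow> ('x set \<Rightarrow> 'a::unital_cstar_algebra \<Rightarrow> ('h::chilbert_space \<Rightarrow> 'h)) \<Rightarrow> bool" where
  "pure_instrument M I \<longleftrightarrow> cp_instrument M I \<and>
     (\<forall>J. dominated_by M J I \<longrightarrow>
        (\<exists>t::real. 0 \<le> t \<and> t \<le> 1 \<and>
           (\<forall>A\<in>sets M. \<forall>a x. J A a x = scaleC (complex_of_real t) (I A a x))))"

end

theory Submission
  imports Defs
begin

text \<open>For measurable \<open>A\<close>, the restriction \<open>B \<mapsto> I (B \<inter> A)\<close> is dominated by \<open>I\<close>, its
  complement being the instrument \<open>B \<mapsto> I (B - A)\<close>. Purity yields a scalar \<open>t\<close> with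
  \<open>I (B \<inter> A) = t I B\<close> for all \<open>B\<close>. Taking \<open>B = A\<close> gives \<open>I A = t I A\<close>, and taking
  \<open>B = X\<close> gives \<open>I A = t I X\<close>: so either \<open>t = 1\<close> and \<open>I A = I X\<close>, or \<open>I A = 0\<close>.\<close>

lemma additive_cinner_right: "Modules.additive (cinner (x::'a::complex_inner))"
  by unfold_locales (rule cinner_add_right)

lemma cinner_right_eqI:
  assumes "\<And>h. cinner h u = cinner h (v::'a::complex_inner)"
  shows "u = v"
proof -
  interpret Modules.additive "cinner (u - v)" by (rule additive_cinner_right)
  have "cinner (u - v) (u - v) = 0"
    using assms[of "u - v"] by (simp add: diff)
  then show ?thesis by (simp add: cinner_self_eq_zero)
qed

lemma scaleC_fixed_eq_zero:
  assumes "scaleC t v = (v::'a::complex_normed_vector)" and "t \<noteq> 1"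
  shows "v = 0"
proof -
  have "scaleC (t - 1) v = scaleC t v + scaleC (-1) v"
    by (simp add: scaleC_add_left[symmetric])
  also have "scaleC (-1) v = - v"
    using scaleR_scaleC[of "-1" v] by simp
  finally have "scaleC (t - 1) v = 0"
    using assms(1) by simp
  then have "cmod (t - 1) * norm v = 0"
    using norm_scaleC[of "t - 1" v] by simp
  with assms(2) show ?thesis by simp
qed

lemma cp_instrument_empty:
  fixes I :: "'x set \<Rightarrow> 'a::unital_cstar_algebra \<Rightarrow> 'h::chilbert_space \<Rightarrow> 'h"
  assumes "cp_instrument M I"
  shows "I {} a k = 0"
proof (rule cinner_right_eqI)
  fix h :: 'h
  have "(\<lambda>n. cinner h (I ((\<lambda>_. {}) n) a k)) sums cinner h (I (\<Union>n. (\<lambda>_. {}) n) a k)"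
    using assms[unfolded cp_instrument_def, THEN conjunct2, rule_format, of "\<lambda>_. {}"]
    by (simp add: disjoint_family_on_def)
  then have "(\<lambda>n. cinner h (I {} a k)) sums cinner h (I {} a k)"
    by simp
  then have "cinner h (I {} a k) = 0"
    using summable_LIMSEQ_zero sums_summable LIMSEQ_const_iff by blast
  then show "cinner h (I {} a k) = cinner h 0"
    by (simp add: Modules.additive.zero[OF additive_cinner_right])
qed

lemma cp_instrument_Un:
  fixes I :: "'x set \<Rightarrow> 'a::unital_cstar_algebra \<Rightarrow> 'h::chilbert_space \<Rightarrow> 'h"
  assumes "cp_instrument M I" "C \<in> sets M" "D \<in> sets M" "C \<inter> D = {}"
  shows "I (C \<union> D) a k = I C a k + I D a k"
proof (rule cinner_right_eqI)
  fix h :: 'h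
  interpret Modules.additive "cinner h" by (rule additive_cinner_right)
  have "range (binaryset C D) \<subseteq> sets M"
    using assms by (auto simp: range_binaryset_eq)
  moreover have "disjoint_family (binaryset C D)"
    using assms(4) by (auto simp: disjoint_family_on_def binaryset_def)
  ultimately have "(\<lambda>n. cinner h (I (binaryset C D n) a k)) sums cinner h (I (C \<union> D) a k)"
    using assms(1) unfolding cp_instrument_def UN_binaryset_eq[symmetric] by blast
  moreover have "(\<lambda>n. cinner h (I (binaryset C D n) a k)) sums (cinner h (I C a k) + cinner h (I D a k))"
    by (rule binaryset_sums[where f = "\<lambda>S. cinner h (I S a k)"])
      (simp add: cp_instrument_empty[OF assms(1)] zero)
  ultimately show "cinner h (I (C \<union> D) a k) = cinner h (I C a k + I D a k)"
    by (simp add: add sums_unique2)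
qed

lemma cp_instrument_Diff:
  assumes "cp_instrument M I" "B \<in> sets M" "A \<in> sets M"
  shows "I (B - A) a k = I B a k - I (B \<inter> A) a k"
proof -
  have "I B a k = I ((B \<inter> A) \<union> (B - A)) a k"
    by (simp add: Int_Diff_Un)
  also have "\<dots> = I (B \<inter> A) a k + I (B - A) a k"
    using assms by (intro cp_instrument_Un) auto
  finally show ?thesis by simp
qed

lemma cp_instrument_restrict:
  assumes "cp_instrument M I" "A \<in> sets M"
  shows "cp_instrument M (\<lambda>B. I (B \<inter> A))"
  unfolding cp_instrument_def
proof (intro conjI ballI allI impI)
  fix B assume "B \<in> sets M"
  then show "cp_map (I (B \<inter> A))"
    using assms unfolding cp_instrument_def by auto
next
  fix a h k and F :: "nat \<Rightarrow> _"
  assume "range F \<subseteq> sets M" "disjoint_family F"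
  then have "range (\<lambda>n. F n \<inter> A) \<subseteq> sets M" "disjoint_family (\<lambda>n. F n \<inter> A)"
    using assms(2) by (auto simp: disjoint_family_on_def)
  then have "(\<lambda>n. cinner h (I (F n \<inter> A) a k)) sums cinner h (I (\<Union>n. F n \<inter> A) a k)"
    using assms(1) unfolding cp_instrument_def by blast
  then show "(\<lambda>n. cinner h (I (F n \<inter> A) a k)) sums cinner h (I (\<Union> (range F) \<inter> A) a k)"
    by (simp add: Int_UN_distrib2)
qed

lemma cp_instrument_cong:
  assumes "\<And>B. B \<in> sets M \<Longrightarrow> I B = J B"
  shows "cp_instrument M I \<longleftrightarrow> cp_instrument M J"
proof -
  have "I (F n) = J (F n)" "I (\<Union>n. F n) = J (\<Union>n. F n)"
    if "range F \<subseteq> sets M" for F :: "nat \<Rightarrow> _" and n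
    using that assms by (auto intro: sets.countable_UN[of F UNIV])
  then show ?thesis
    unfolding cp_instrument_def using assms by simp
qed

lemma cp_instrument_restrict_compl:
  assumes "cp_instrument M I" "A \<in> sets M"
  shows "cp_instrument M (\<lambda>B a x. I B a x - I (B \<inter> A) a x)"
proof -
  have "cp_instrument M (\<lambda>B. I (B \<inter> (space M - A)))"
    using assms by (intro cp_instrument_restrict) auto
  moreover have "I (B \<inter> (space M - A)) = (\<lambda>a x. I B a x - I (B \<inter> A) a x)" if "B \<in> sets M" for B
  proof -
    have "B \<inter> (space M - A) = B - A"
      using sets.sets_into_space[OF that] by blast
    then show ?thesis
      using cp_instrument_Diff[OF assms(1) that assms(2)] by (simp add: fun_eq_iff)
  qed
  ultimately show ?thesis
    by (subst cp_instrument_cong) auto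
qed

lemma dominated_by_restrict:
  assumes "cp_instrument M I" "A \<in> sets M"
  shows "dominated_by M (\<lambda>B. I (B \<inter> A)) I"
  unfolding dominated_by_def
  using cp_instrument_restrict[OF assms] cp_instrument_restrict_compl[OF assms] by blast

lemma pure_instrument_trivial:
  assumes "pure_instrument M I" "A \<in> sets M"
  shows "I A = (\<lambda>a x. 0) \<or> I A = I (space M)"
proof -
  have I: "cp_instrument M I"
    using assms(1) unfolding pure_instrument_def by blast
  obtain t :: real where t: "\<And>B a x. B \<in> sets M \<Longrightarrow> I (B \<inter> A) a x = scaleC t (I B a x)"
    using assms(1) dominated_by_restrict[OF I assms(2)] unfolding pure_instrument_def by blast
  have fixed: "I A a x = scaleC t (I A a x)" for a x
    using t[OF assms(2)] by simp
  have total: "I A a x = scaleC t (I (space M) a x)" for a x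
    using t[OF sets.top] sets.sets_into_space[OF assms(2)] by (simp add: Int_absorb1)
  show ?thesis
  proof (cases "t = 1")
    case True
    then show ?thesis
      using total by (simp add: scaleC_one fun_eq_iff)
  next
    case False
    then have "I A a x = 0" for a x
      using fixed scaleC_fixed_eq_zero by (metis of_real_eq_1_iff)
    then show ?thesis
      by (simp add: fun_eq_iff)
  qed
qed

theorem corollary2p20:
  fixes M :: "'x measure"
    and I :: "'x set \<Rightarrow> 'a::unital_cstar_algebra \<Rightarrow> ('h::chilbert_space \<Rightarrow> 'h)"
  assumes "pure_instrument M I"
  shows "\<forall>A\<in>sets M. povm_marginal I A = (\<lambda>x. 0) \<or> povm_marginal I A = povm_marginal I (space M)"
  using pure_instrument_trivial[OF assms] unfolding povm_marginal_def by fastforce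

end
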